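(* Let $A$ be a hyperoperator on $\mathbb{R}^n$ on the complex Banach space $X$, let $f\in\mathcal{E}(\mathbb{R}^n,\mathbb{R}^m)$, and let $X'=\{x\in D_A: f(a)x=0\}$ and $Y=\overline{X'}$. Then $Y$ is an $a$-invariant closed subspace of $X$ (in particular $a_j$ maps $X'$ into $X'$ and $A(\phi)Y\subset Y$ for all $\phi\in\mathcal{D}(\mathbb{R}^n)$), and the restriction $a'=a|_Y$ is a hyperoperator, i.e. $A'(\phi):=A(\phi)|_Y$ defines a hyperoperator on $\mathbb{R}^n$ on the Banach space $Y$. Moreover $D_{A'}=X'$ and $$\operatorname{int}\{f=0\}\cap\sigma(A)\subset\sigma(A')\subset\{f=0\}\cap\sigma(A).$$ If $\{f=0\}$ contains an open subset of $\mathbb{R}^n$ that meets $\sigma(A)$, then $Y\neq\{0\}$.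
   Context: $X$ is a complex Banach space, $L(X)$ the bounded operators. $\mathcal{D}(\mathbb{R}^n)=C_c^\infty(\mathbb{R}^n)$ (complex-valued); $\mathcal{E}(\mathbb{R}^n,\mathbb{R}^m)$ the smooth maps $\mathbb{R}^n\to\mathbb{R}^m$. A hyperoperator on $\mathbb{R}^n$ on a Banach space $Z$ is a linear map $B:\mathcal{D}(\mathbb{R}^n)\to L(Z)$, continuous ($B(\phi_j)\to0$ in operator norm when $\phi_j\to0$ in $\mathcal{D}(\mathbb{R}^n)$), multiplicative ($B(\phi\psi)=B(\phi)B(\psi)$), with (i) $D_B:=\bigcup_\phi\operatorname{Im}B(\phi)$ dense in $Z$ and (ii) $\bigcap_\phi\operatorname{Ker}B(\phi)=\{0\}$. For smooth $g:\mathbb{R}^n\to\mathbb{R}^k$ and $x\in D_A$ written $x=A(\phi)y$, $g(a)x:=A(g\phi)y$ (well defined, componentwise); $a_j:=g_j(a)$ with $g_j(\xi)=\xi_j$. $\sigma(A)$ denotes the support of $A$ as an $L(X)$-valued distribution; $\{f=0\}=f^{-1}(0)$. *)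

theory Defs
  imports "HOL-Analysis.Analysis"
begin

text \<open>HOL has no type class of complex vector spaces.  A complex Banach space is
rendered as a real Banach space (type class banach) together with a complex scalar
multiplication smul extending the real one and compatible with the norm.\<close>

definition complex_banach :: "(complex \<Rightarrow> 'x::banach \<Rightarrow> 'x) \<Rightarrow> bool" where
  "complex_banach smul \<longleftrightarrow> vector_space smul
     \<and> (\<forall>(r::real) x. smul (complex_of_real r) x = r *\<^sub>R x)
     \<and> (\<forall>c x. norm (smul c x) = cmod c * norm x)"

definition csubspace :: "(complex \<Rightarrow> 'x::banach \<Rightarrow> 'x) \<Rightarrow> 'x set \<Rightarrow> bool" where
  "csubspace smul Z \<longleftrightarrow> 0 \<in> Z \<and> (\<forall>x\<in>Z. \<forall>y\<in>Z. x + y \<in> Z) \<and> (\<forall>c. \<forall>x\<in>Z. smul c x \<in> Z)"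

text \<open>Bounded complex-linear operators on a closed subspace Z (a Banach space in its own
right); operators are represented as functions on the ambient space, only their values
on Z matter.\<close>

definition bounded_op_on :: "(complex \<Rightarrow> 'x::banach \<Rightarrow> 'x) \<Rightarrow> 'x set \<Rightarrow> ('x \<Rightarrow> 'x) \<Rightarrow> bool" where
  "bounded_op_on smul Z T \<longleftrightarrow> T ` Z \<subseteq> Z
     \<and> (\<forall>x\<in>Z. \<forall>y\<in>Z. T (x + y) = T x + T y)
     \<and> (\<forall>c. \<forall>x\<in>Z. T (smul c x) = smul c (T x))
     \<and> (\<exists>K. \<forall>x\<in>Z. norm (T x) \<le> K * norm x)"

definition opnorm_on :: "'x set \<Rightarrow> ('x::real_normed_vector \<Rightarrow> 'x) \<Rightarrow> real" where
  "opnorm_on Z T = Sup ({norm (T x) | x. x \<in> Z \<and> norm x \<le> 1} \<union> {0})"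

definition dderiv :: "'a::real_normed_vector \<Rightarrow> ('a \<Rightarrow> 'b::real_normed_vector) \<Rightarrow> 'a \<Rightarrow> 'b" where
  "dderiv v f = (\<lambda>x. frechet_derivative f (at x) v)"

fun dderivs :: "'a::real_normed_vector list \<Rightarrow> ('a \<Rightarrow> 'b::real_normed_vector) \<Rightarrow> 'a \<Rightarrow> 'b" where
  "dderivs [] f = f"
| "dderivs (v # vs) f = dderiv v (dderivs vs f)"

definition smooth :: "('a::euclidean_space \<Rightarrow> 'b::real_normed_vector) \<Rightarrow> bool" where
  "smooth f \<longleftrightarrow> (\<forall>vs. set vs \<subseteq> Basis \<longrightarrow> (\<forall>x. dderivs vs f differentiable (at x)))"

definition tsupport :: "('a::topological_space \<Rightarrow> 'b::zero) \<Rightarrow> 'a set" where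
  "tsupport f = closure {x. f x \<noteq> 0}"

definition test_fun :: "('a::euclidean_space \<Rightarrow> complex) \<Rightarrow> bool" where
  "test_fun \<phi> \<longleftrightarrow> smooth \<phi> \<and> compact (tsupport \<phi>)"

definition D_tendsto_zero :: "(nat \<Rightarrow> 'a::euclidean_space \<Rightarrow> complex) \<Rightarrow> bool" where
  "D_tendsto_zero \<phi>s \<longleftrightarrow> (\<forall>j. test_fun (\<phi>s j))
     \<and> (\<exists>K. compact K \<and> (\<forall>j. tsupport (\<phi>s j) \<subseteq> K))
     \<and> (\<forall>vs. set vs \<subseteq> Basis \<longrightarrow>
          (\<forall>e>0. \<forall>\<^sub>F j in sequentially. \<forall>x. norm (dderivs vs (\<phi>s j) x) < e))"

definition hyperoperator ::
  "(complex \<Rightarrow> 'x::banach \<Rightarrow> 'x) \<Rightarrow> 'x set \<Rightarrow> (('a::euclidean_space \<Rightarrow> complex) \<Rightarrow> 'x \<Rightarrow> 'x) \<Rightarrow> bool" where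
  "hyperoperator smul Z B \<longleftrightarrow>
     csubspace smul Z \<and> closed Z
     \<and> (\<forall>\<phi>. test_fun \<phi> \<longrightarrow> bounded_op_on smul Z (B \<phi>))
     \<and> (\<forall>\<phi> \<psi>. test_fun \<phi> \<longrightarrow> test_fun \<psi> \<longrightarrow> (\<forall>x\<in>Z. B (\<lambda>t. \<phi> t + \<psi> t) x = B \<phi> x + B \<psi> x))
     \<and> (\<forall>\<phi> c. test_fun \<phi> \<longrightarrow> (\<forall>x\<in>Z. B (\<lambda>t. c * \<phi> t) x = smul c (B \<phi> x)))
     \<and> (\<forall>\<phi>s. D_tendsto_zero \<phi>s \<longrightarrow> (\<lambda>j. opnorm_on Z (B (\<phi>s j))) \<longlonglongrightarrow> 0)
     \<and> (\<forall>\<phi> \<psi>. test_fun \<phi> \<longrightarrow> test_fun \<psi> \<longrightarrow> (\<forall>x\<in>Z. B (\<lambda>t. \<phi> t * \<psi> t) x = B \<phi> (B \<psi> x)))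
     \<and> Z \<subseteq> closure (\<Union>\<phi>\<in>{\<phi>. test_fun \<phi>}. B \<phi> ` Z)
     \<and> (\<forall>x\<in>Z. (\<forall>\<phi>. test_fun \<phi> \<longrightarrow> B \<phi> x = 0) \<longrightarrow> x = 0)"

definition hdom :: "'x set \<Rightarrow> (('a::euclidean_space \<Rightarrow> complex) \<Rightarrow> 'x \<Rightarrow> 'x) \<Rightarrow> 'x set" where
  "hdom Z B = (\<Union>\<phi>\<in>{\<phi>. test_fun \<phi>}. B \<phi> ` Z)"

definition hsupport :: "'x::zero set \<Rightarrow> (('a::euclidean_space \<Rightarrow> complex) \<Rightarrow> 'x \<Rightarrow> 'x) \<Rightarrow> 'a set" where
  "hsupport Z B = {t. \<not> (\<exists>U. open U \<and> t \<in> U \<and>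
       (\<forall>\<phi>. test_fun \<phi> \<and> tsupport \<phi> \<subseteq> U \<longrightarrow> (\<forall>x\<in>Z. B \<phi> x = 0)))}"

text \<open>Functional calculus g(a) for a real smooth g: for x = B(phi) y,
g(a) x = B(g phi) y (well defined on D_B).\<close>

definition hcalc :: "'x set \<Rightarrow> (('a::euclidean_space \<Rightarrow> complex) \<Rightarrow> 'x \<Rightarrow> 'x) \<Rightarrow> ('a \<Rightarrow> real) \<Rightarrow> 'x \<Rightarrow> 'x" where
  "hcalc Z B g x = (SOME v. \<exists>\<phi> y. test_fun \<phi> \<and> y \<in> Z \<and> x = B \<phi> y
                      \<and> v = B (\<lambda>t. complex_of_real (g t) * \<phi> t) y)"

end

theory Submission
  imports Defs
begin

text \<open>
  For smooth \<open>g\<close> and \<open>x = A(\<phi>) y\<close> in \<open>D\<^sub>A\<close> we have \<open>g(a) x = A(g \<phi>) y\<close>, hence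
  \<open>A(\<psi>) g(a) = A(\<psi> g)\<close> on \<open>D\<^sub>A\<close>. So \<open>A(f\<^sub>i \<phi>)\<close> vanishes on \<open>X'\<close>, and by continuity on
  \<open>Y\<close>; this says exactly that \<open>A(\<phi>)\<close> maps \<open>Y\<close> into \<open>X'\<close>. Thus \<open>Y\<close> is invariant,
  the restriction has domain \<open>X'\<close>, and the hyperoperator axioms pass to it.

  If \<open>f(t\<^sub>0) \<noteq> 0\<close>, some \<open>f\<^sub>i\<close> is bounded away from \<open>0\<close> near \<open>t\<^sub>0\<close>, so every test
  function \<open>\<phi>\<close> supported there factors as \<open>f\<^sub>i \<psi>\<close> and \<open>A(\<phi>)\<close> vanishes on \<open>Y\<close>: hence
  \<open>\<sigma>(A') \<subseteq> {f = 0}\<close>. If \<open>t\<^sub>0 \<in> \<sigma>(A)\<close> is interior to \<open>{f = 0}\<close>, choose \<open>\<phi>\<close> supported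
  near \<open>t\<^sub>0\<close> inside \<open>{f = 0}\<close> with \<open>A(\<phi>) x \<noteq> 0\<close> and a cutoff \<open>\<psi> = 1\<close> on its support,
  supported there too; then \<open>A(\<psi>) x \<in> X'\<close> and \<open>A(\<phi>) A(\<psi>) x = A(\<phi>) x \<noteq> 0\<close>, so
  \<open>t\<^sub>0 \<in> \<sigma>(A')\<close>. All test functions needed are built from \<open>s \<mapsto> exp (-1/s)\<close>.
\<close>

section \<open>Smoothness of finite order\<close>

text \<open>Closure properties of \<^const>\<open>smooth\<close> are proved for each finite order \<open>N\<close>, by
  induction on \<open>N\<close>.\<close>

definition smooth_upto :: "nat \<Rightarrow> ('a::euclidean_space \<Rightarrow> 'b::real_normed_vector) \<Rightarrow> bool" where
  "smooth_upto N f \<longleftrightarrow>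
     (\<forall>vs. length vs \<le> N \<longrightarrow> set vs \<subseteq> Basis \<longrightarrow> (\<forall>x. dderivs vs f differentiable (at x)))"

lemma dderivs_append: "dderivs (vs @ ws) f = dderivs vs (dderivs ws f)"
  by (induction vs) auto

lemma smooth_iff_smooth_upto: "smooth f \<longleftrightarrow> (\<forall>N. smooth_upto N f)"
  unfolding smooth_def smooth_upto_def by auto

lemma smooth_upto_0: "smooth_upto 0 f \<longleftrightarrow> (\<forall>x. f differentiable (at x))"
  unfolding smooth_upto_def by auto

lemma smooth_upto_Suc:
  "smooth_upto (Suc N) f \<longleftrightarrow>
     (\<forall>x. f differentiable (at x)) \<and> (\<forall>v\<in>Basis. smooth_upto N (dderiv v f))"
proof
  assume f: "smooth_upto (Suc N) f"
  have "smooth_upto N (dderiv v f)" if "v \<in> Basis" for v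
    unfolding smooth_upto_def
  proof (intro allI impI)
    fix vs :: "'a list" and x
    assume "length vs \<le> N" "set vs \<subseteq> Basis"
    then show "dderivs vs (dderiv v f) differentiable (at x)"
      using f[unfolded smooth_upto_def, rule_format, of "vs @ [v]"] that
      by (auto simp: dderivs_append)
  qed
  moreover have "\<forall>x. f differentiable (at x)"
    using f[unfolded smooth_upto_def, rule_format, of "[]"] by auto
  ultimately show "(\<forall>x. f differentiable (at x)) \<and> (\<forall>v\<in>Basis. smooth_upto N (dderiv v f))"
    by blast
next
  assume f: "(\<forall>x. f differentiable (at x)) \<and> (\<forall>v\<in>Basis. smooth_upto N (dderiv v f))"
  show "smooth_upto (Suc N) f" unfolding smooth_upto_def
  proof (intro allI impI)
    fix vs :: "'a list" and x
    assume vs: "length vs \<le> Suc N" "set vs \<subseteq> Basis"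
    show "dderivs vs f differentiable (at x)"
    proof (cases vs rule: rev_exhaust)
      case Nil
      then show ?thesis using f by simp
    next
      case (snoc ws v)
      then have "dderivs vs f = dderivs ws (dderiv v f)"
        by (simp add: dderivs_append)
      moreover have "smooth_upto N (dderiv v f)"
        using f vs snoc by auto
      ultimately show ?thesis
        using vs snoc unfolding smooth_upto_def by auto
    qed
  qed
qed

lemma smooth_upto_mono: "smooth_upto N f \<Longrightarrow> M \<le> N \<Longrightarrow> smooth_upto M f"
  unfolding smooth_upto_def by auto

lemma smooth_upto_SucD: "smooth_upto (Suc N) f \<Longrightarrow> smooth_upto N f"
  by (rule smooth_upto_mono) auto

lemma smooth_upto_differentiable: "smooth_upto N f \<Longrightarrow> f differentiable (at x)"
  using smooth_upto_mono[of N f 0] by (simp add: smooth_upto_0)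

lemma smooth_upto_continuous_on: "smooth_upto N f \<Longrightarrow> continuous_on S f"
  using smooth_upto_differentiable[of N f]
  by (intro continuous_at_imp_continuous_on ballI differentiable_imp_continuous_within) blast

lemma has_derivative_dderiv: "(f has_derivative f') (at x) \<Longrightarrow> dderiv v f x = f' v"
  unfolding dderiv_def by (metis frechet_derivative_at)

lemma has_real_derivative_dderiv: "(f has_real_derivative D) (at s) \<Longrightarrow> dderiv 1 f s = D"
  using has_derivative_dderiv[of f "(*) D" s 1] by (simp add: has_field_derivative_def)

lemma smooth_upto_const: "smooth_upto N (\<lambda>x. c)"
proof (induction N arbitrary: c)
  case 0
  then show ?case by (simp add: smooth_upto_0)
next
  case (Suc N)
  have "dderiv v (\<lambda>x. c) = (\<lambda>x. 0)" for v :: 'a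
    by (rule ext, rule has_derivative_dderiv) simp
  then show ?case using Suc by (simp add: smooth_upto_Suc)
qed

lemma smooth_upto_linear: "bounded_linear L \<Longrightarrow> smooth_upto N L"
proof (cases N)
  case 0
  assume "bounded_linear L"
  then show ?thesis using 0 by (simp add: smooth_upto_0 bounded_linear_imp_differentiable)
next
  case (Suc M)
  assume L: "bounded_linear L"
  have "dderiv v L = (\<lambda>x. L v)" for v
    by (rule ext, rule has_derivative_dderiv, rule bounded_linear_imp_has_derivative[OF L])
  then show ?thesis
    using Suc L by (simp add: smooth_upto_Suc smooth_upto_const bounded_linear_imp_differentiable)
qed

lemma smooth_upto_add:
  "smooth_upto N f \<Longrightarrow> smooth_upto N g \<Longrightarrow> smooth_upto N (\<lambda>x. f x + g x)"
proof (induction N arbitrary: f g)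
  case 0
  then show ?case by (simp add: smooth_upto_0 differentiable_add)
next
  case (Suc N)
  have "dderiv v (\<lambda>x. f x + g x) = (\<lambda>x. dderiv v f x + dderiv v g x)" for v
  proof
    fix x
    have "f differentiable (at x)" "g differentiable (at x)"
      using Suc.prems smooth_upto_differentiable by blast+
    then show "dderiv v (\<lambda>x. f x + g x) x = dderiv v f x + dderiv v g x"
      unfolding dderiv_def
      by (metis (no_types) frechet_derivative_at frechet_derivative_works has_derivative_add)
  qed
  then show ?case using Suc by (simp add: smooth_upto_Suc differentiable_add)
qed

lemma smooth_upto_bounded_linear_compose:
  assumes L: "bounded_linear L"
  shows "smooth_upto N f \<Longrightarrow> smooth_upto N (\<lambda>x. L (f x))"
proof (induction N arbitrary: f)
  case 0
  then show ?case
    by (auto simp: smooth_upto_0 differentiable_def intro: bounded_linear.has_derivative[OF L])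
next
  case (Suc N)
  have f: "f differentiable (at x)" for x
    using Suc.prems smooth_upto_differentiable by blast
  have "dderiv v (\<lambda>x. L (f x)) = (\<lambda>x. L (dderiv v f x))" for v
  proof
    fix x
    show "dderiv v (\<lambda>x. L (f x)) x = L (dderiv v f x)"
      using f[of x] bounded_linear.has_derivative[OF L] unfolding dderiv_def
      by (metis frechet_derivative_at frechet_derivative_works)
  qed
  moreover have "(\<lambda>x. L (f x)) differentiable (at x)" for x
    using f bounded_linear.has_derivative[OF L] unfolding differentiable_def by blast
  ultimately show ?case using Suc unfolding smooth_upto_Suc by auto
qed

lemma smooth_upto_minus: "smooth_upto N f \<Longrightarrow> smooth_upto N (\<lambda>x. - f x)"
  by (rule smooth_upto_bounded_linear_compose[OF bounded_linear_minus[OF bounded_linear_ident]])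

lemma smooth_upto_diff:
  "smooth_upto N f \<Longrightarrow> smooth_upto N g \<Longrightarrow> smooth_upto N (\<lambda>x. f x - g x)"
  using smooth_upto_add[OF _ smooth_upto_minus, of N f g] by simp

lemma smooth_upto_sum:
  "finite I \<Longrightarrow> (\<And>i. i \<in> I \<Longrightarrow> smooth_upto N (f i)) \<Longrightarrow> smooth_upto N (\<lambda>x. \<Sum>i\<in>I. f i x)"
proof (induction I rule: finite_induct)
  case empty
  then show ?case using smooth_upto_const[of N 0] by simp
next
  case (insert a I)
  then show ?case by (simp add: smooth_upto_add)
qed

lemma smooth_upto_mult:
  fixes f g :: "'a::euclidean_space \<Rightarrow> 'b::real_normed_algebra"
  shows "smooth_upto N f \<Longrightarrow> smooth_upto N g \<Longrightarrow> smooth_upto N (\<lambda>x. f x * g x)"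
proof (induction N arbitrary: f g)
  case 0
  then show ?case unfolding smooth_upto_0 using differentiable_mult by blast
next
  case (Suc N)
  have d: "dderiv v (\<lambda>x. f x * g x) = (\<lambda>x. f x * dderiv v g x + dderiv v f x * g x)" for v
  proof
    fix x
    have "f differentiable (at x)" "g differentiable (at x)"
      using Suc.prems smooth_upto_differentiable by blast+
    then have "((\<lambda>x. f x * g x) has_derivative
        (\<lambda>h. f x * frechet_derivative g (at x) h + frechet_derivative f (at x) h * g x)) (at x)"
      by (intro has_derivative_mult) (simp_all add: frechet_derivative_works)
    from has_derivative_dderiv[OF this, of v]
    show "dderiv v (\<lambda>x. f x * g x) x = f x * dderiv v g x + dderiv v f x * g x"
      by (simp add: dderiv_def)
  qed
  have fN: "smooth_upto N f" "smooth_upto N g"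
    using Suc.prems by (simp_all add: smooth_upto_SucD)
  have "smooth_upto N (dderiv v f)" "smooth_upto N (dderiv v g)" if "v \<in> Basis" for v
    using Suc.prems that by (auto simp: smooth_upto_Suc)
  then have "\<forall>v\<in>Basis. smooth_upto N (dderiv v (\<lambda>x. f x * g x))"
    unfolding d by (intro ballI smooth_upto_add Suc.IH fN) auto
  moreover have "\<forall>x. (\<lambda>x. f x * g x) differentiable (at x)"
    using Suc.prems smooth_upto_differentiable differentiable_mult by blast
  ultimately show ?case unfolding smooth_upto_Suc by blast
qed

lemma smooth_upto_compose:
  fixes H :: "real \<Rightarrow> real" and F :: "'a::euclidean_space \<Rightarrow> real"
  shows "smooth_upto N H \<Longrightarrow> smooth_upto N F \<Longrightarrow> smooth_upto N (\<lambda>x. H (F x))"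
proof (induction N arbitrary: H)
  case 0
  have "(\<lambda>x. H (F x)) differentiable (at x)" for x
    using smooth_upto_differentiable[OF 0(2)] smooth_upto_differentiable[OF 0(1)]
    by (metis differentiable_def has_derivative_compose)
  then show ?case by (simp add: smooth_upto_0)
next
  case (Suc N)
  have chain: "dderiv v (\<lambda>x. H (F x)) = (\<lambda>x. dderiv 1 H (F x) * dderiv v F x)" for v
  proof
    fix x
    let ?F' = "frechet_derivative F (at x)" and ?H' = "frechet_derivative H (at (F x))"
    have "F differentiable (at x)" and H: "H differentiable (at (F x))"
      using Suc.prems smooth_upto_differentiable by blast+
    then have "((\<lambda>x. H (F x)) has_derivative (\<lambda>y. ?H' (?F' y))) (at x)"
      unfolding frechet_derivative_works by (rule has_derivative_compose)
    then have "dderiv v (\<lambda>x. H (F x)) x = ?H' (?F' v * 1)"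
      by (simp add: has_derivative_dderiv)
    also have "\<dots> = ?F' v * ?H' 1"
      by (rule linear_scale_real[OF linear_frechet_derivative[OF H]])
    finally show "dderiv v (\<lambda>x. H (F x)) x = dderiv 1 H (F x) * dderiv v F x"
      by (simp add: dderiv_def)
  qed
  have HN: "smooth_upto N H" and FN: "smooth_upto N F"
    using Suc.prems by (simp_all add: smooth_upto_SucD)
  have "smooth_upto N (dderiv 1 H)"
    using Suc.prems(1) unfolding smooth_upto_Suc by auto
  then have H'F: "smooth_upto N (\<lambda>x. dderiv 1 H (F x))"
    using FN by (rule Suc.IH)
  have "smooth_upto N (dderiv v (\<lambda>x. H (F x)))" if "v \<in> Basis" for v
    unfolding chain using H'F
  proof (rule smooth_upto_mult)
    show "smooth_upto N (dderiv v F)"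
      using Suc.prems(2) that by (simp add: smooth_upto_Suc)
  qed
  moreover have "(\<lambda>x. H (F x)) differentiable (at x)" for x
    using smooth_upto_differentiable[OF Suc.IH[OF HN FN]] .
  ultimately show ?case unfolding smooth_upto_Suc by blast
qed

lemma smooth_upto_inverse:
  fixes F :: "'a::euclidean_space \<Rightarrow> real"
  assumes nz: "\<And>x. F x \<noteq> 0"
  shows "smooth_upto N F \<Longrightarrow> smooth_upto N (\<lambda>x. inverse (F x))"
proof (induction N)
  case 0
  have "(\<lambda>x. inverse (F x)) differentiable (at x)" for x
    using Deriv.has_derivative_inverse[where f=F, OF nz[of x]] smooth_upto_differentiable[OF 0]
    unfolding differentiable_def by blast
  then show ?case by (simp add: smooth_upto_0)
next
  case (Suc N)
  have d: "dderiv v (\<lambda>x. inverse (F x)) = (\<lambda>x. - (inverse (F x) * dderiv v F x * inverse (F x)))"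
    for v
  proof
    fix x
    have "(F has_derivative frechet_derivative F (at x)) (at x)"
      using smooth_upto_differentiable[OF Suc.prems] unfolding frechet_derivative_works .
    from Deriv.has_derivative_inverse[where f=F, OF nz[of x] this]
    have "((\<lambda>x. inverse (F x)) has_derivative
        (\<lambda>h. - (inverse (F x) * frechet_derivative F (at x) h * inverse (F x)))) (at x)" .
    from has_derivative_dderiv[OF this, of v]
    show "dderiv v (\<lambda>x. inverse (F x)) x = - (inverse (F x) * dderiv v F x * inverse (F x))"
      by (simp add: dderiv_def)
  qed
  have I: "smooth_upto N (\<lambda>x. inverse (F x))"
    using Suc by (simp add: smooth_upto_SucD)
  have "smooth_upto N (dderiv v F)" if "v \<in> Basis" for v
    using Suc.prems that by (auto simp: smooth_upto_Suc)
  then have "\<forall>v\<in>Basis. smooth_upto N (dderiv v (\<lambda>x. inverse (F x)))"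
    unfolding d by (intro ballI smooth_upto_minus smooth_upto_mult I) auto
  then show ?case
    using smooth_upto_differentiable[OF I] unfolding smooth_upto_Suc by blast
qed

lemma smooth_mult:
  "smooth f \<Longrightarrow> smooth g \<Longrightarrow> smooth (\<lambda>x. f x * g x :: 'b::real_normed_algebra)"
  unfolding smooth_iff_smooth_upto using smooth_upto_mult by blast

lemma smooth_compose:
  fixes H :: "real \<Rightarrow> real" and F :: "'a::euclidean_space \<Rightarrow> real"
  shows "smooth H \<Longrightarrow> smooth F \<Longrightarrow> smooth (\<lambda>x. H (F x))"
  unfolding smooth_iff_smooth_upto using smooth_upto_compose by blast

lemma smooth_bounded_linear_compose: "bounded_linear L \<Longrightarrow> smooth f \<Longrightarrow> smooth (\<lambda>x. L (f x))"
  unfolding smooth_iff_smooth_upto using smooth_upto_bounded_linear_compose by blast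

lemma smooth_of_real: "smooth g \<Longrightarrow> smooth (\<lambda>t. complex_of_real (g t))"
  by (rule smooth_bounded_linear_compose[OF bounded_linear_of_real])

lemma smooth_component: "smooth f \<Longrightarrow> smooth (\<lambda>t. f t $ i)"
  by (rule smooth_bounded_linear_compose[OF bounded_linear_vec_nth])

lemma smooth_coordinate: "smooth (\<lambda>t::real^'n. t $ j)"
  unfolding smooth_iff_smooth_upto using smooth_upto_linear[OF bounded_linear_vec_nth] by blast

section \<open>Smooth cutoff functions\<close>

lemma in_tsupport: "f t \<noteq> 0 \<Longrightarrow> t \<in> tsupport f"
  unfolding tsupport_def by (rule closure_subset[THEN subsetD]) simp

lemma tsupport_mult_subset:
  fixes g \<phi> :: "'a::topological_space \<Rightarrow> 'b::mult_zero"
  shows "tsupport (\<lambda>t. g t * \<phi> t) \<subseteq> tsupport \<phi>"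
  unfolding tsupport_def by (rule closure_mono) auto

lemma compact_tsupport_subset: "tsupport f \<subseteq> C \<Longrightarrow> compact C \<Longrightarrow> compact (tsupport f)"
  unfolding tsupport_def using compact_Int_closed[of C "closure {x. f x \<noteq> 0}"]
  by (simp add: Int_absorb1)

definition expinv :: "nat \<Rightarrow> real \<Rightarrow> real" where
  "expinv k s = (if 0 < s then inverse s ^ k * exp (- inverse s) else 0)"

lemma expinv_pos: "0 < s \<Longrightarrow> 0 < expinv k s"
  by (simp add: expinv_def)

lemma expinv_eq_0: "s \<le> 0 \<Longrightarrow> expinv k s = 0"
  by (simp add: expinv_def)

lemma expinv_nonneg: "0 \<le> expinv k s"
  by (simp add: expinv_def)

lemma expinv_has_real_derivative_0: "(expinv k has_real_derivative 0) (at 0)"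
proof -
  have "((\<lambda>y. (expinv k y - expinv k 0) / (y - 0)) \<longlongrightarrow> 0) (at_left 0)"
  proof (rule tendsto_eventually)
    show "\<forall>\<^sub>F y in at_left 0. (expinv k y - expinv k 0) / (y - 0) = (0::real)"
    proof (rule eventually_mono)
      show "\<forall>\<^sub>F y in at_left 0. y < (0::real)"
        by (simp add: eventually_at_filter)
    qed (simp add: expinv_def)
  qed
  moreover have "((\<lambda>y. (expinv k y - expinv k 0) / (y - 0)) \<longlongrightarrow> 0) (at_right 0)"
  proof (rule Lim_transform_eventually)
    show "((\<lambda>y. inverse y ^ Suc k / exp (inverse y)) \<longlongrightarrow> 0) (at_right (0::real))"
      using filterlim_compose[OF tendsto_power_div_exp_0 filterlim_inverse_at_top_right]
      unfolding o_def .
    show "\<forall>\<^sub>F y in at_right 0. inverse y ^ Suc k / exp (inverse y) = (expinv k y - expinv k 0) / (y - 0)"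
      using eventually_at_right_less[of "0::real"]
      by eventually_elim (simp add: expinv_def exp_minus field_simps)
  qed
  ultimately show ?thesis
    by (simp add: has_field_derivative_iff filterlim_at_split)
qed

lemma expinv_has_real_derivative:
  "(expinv k has_real_derivative (expinv (Suc (Suc k)) s - real k * expinv (Suc k) s)) (at s)"
proof (cases s "0::real" rule: linorder_cases)
  case less
  then have "expinv (Suc (Suc k)) s - real k * expinv (Suc k) s = 0"
    by (simp add: expinv_eq_0)
  moreover have "(expinv k has_real_derivative 0) (at s)"
    by (rule has_field_derivative_transform_within_open[OF DERIV_const, where S="{..<0}"])
       (use less in \<open>auto simp: expinv_def\<close>)
  ultimately show ?thesis by simp
next
  case equal
  then show ?thesis using expinv_has_real_derivative_0 by (simp add: expinv_def)
next
  case greater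
  have "((\<lambda>s. inverse s ^ k * exp (- inverse s)) has_real_derivative
      (real k * inverse s ^ (k - 1) * (- (inverse s ^ 2)) * exp (- inverse s)
        + inverse s ^ k * (exp (- inverse s) * inverse s ^ 2))) (at s)"
    using greater by (auto intro!: derivative_eq_intros simp: power2_eq_square)
  also have "real k * inverse s ^ (k - 1) * (- (inverse s ^ 2)) * exp (- inverse s)
        + inverse s ^ k * (exp (- inverse s) * inverse s ^ 2)
      = expinv (Suc (Suc k)) s - real k * expinv (Suc k) s"
    using greater by (cases k) (simp_all add: expinv_def power2_eq_square algebra_simps)
  finally show ?thesis
    by (rule has_field_derivative_transform_within_open[where S="{0<..}"])
       (use greater in \<open>auto simp: expinv_def\<close>)
qed

lemma smooth_upto_expinv: "smooth_upto N (expinv k)"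
proof (induction N arbitrary: k)
  case 0
  show ?case
    unfolding smooth_upto_0 using expinv_has_real_derivative real_differentiable_def by blast
next
  case (Suc N)
  have "dderiv 1 (expinv k) = (\<lambda>s. expinv (Suc (Suc k)) s - real k * expinv (Suc k) s)"
    by (rule ext, rule has_real_derivative_dderiv, rule expinv_has_real_derivative)
  then have "smooth_upto N (dderiv 1 (expinv k))"
    by (simp add: smooth_upto_diff smooth_upto_mult smooth_upto_const Suc.IH)
  then show ?case
    using expinv_has_real_derivative real_differentiable_def by (simp add: smooth_upto_Suc) blast
qed

definition ball_bump :: "'a::euclidean_space \<Rightarrow> real \<Rightarrow> 'a \<Rightarrow> real" where
  "ball_bump x r t = expinv 0 (r\<^sup>2 - (t - x) \<bullet> (t - x))"

lemma smooth_upto_ball_bump: "smooth_upto N (ball_bump x r)"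
proof -
  have "(\<lambda>t. (t - x) \<bullet> (t - x)) = (\<lambda>t. \<Sum>i\<in>Basis. (t \<bullet> i - x \<bullet> i) * (t \<bullet> i - x \<bullet> i))"
    by (rule ext, subst euclidean_inner) (simp add: inner_diff_left)
  then have "smooth_upto N (\<lambda>t. (t - x) \<bullet> (t - x))"
    by (simp add: smooth_upto_sum smooth_upto_mult smooth_upto_diff smooth_upto_const
        smooth_upto_linear bounded_linear_inner_left)
  then show ?thesis
    unfolding ball_bump_def
    by (intro smooth_upto_compose[OF smooth_upto_expinv] smooth_upto_diff smooth_upto_const)
qed

lemma ball_bump_nonneg: "0 \<le> ball_bump x r t"
  by (simp add: ball_bump_def expinv_nonneg)

lemma ball_bump_pos: "t \<in> ball x r \<Longrightarrow> 0 < ball_bump x r t"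
  unfolding ball_bump_def
  by (intro expinv_pos) (simp add: dist_norm power2_norm_eq_inner[symmetric] norm_minus_commute
      power_strict_mono)

lemma ball_bump_eq_0: "0 \<le> r \<Longrightarrow> t \<notin> cball x r \<Longrightarrow> ball_bump x r t = 0"
  unfolding ball_bump_def
  by (intro expinv_eq_0) (simp add: dist_norm power2_norm_eq_inner[symmetric] norm_minus_commute
      power_mono)

definition smooth_step :: "real \<Rightarrow> real \<Rightarrow> real" where
  "smooth_step m s = expinv 0 s / (expinv 0 s + expinv 0 (m - s))"

lemma smooth_upto_smooth_step:
  assumes "0 < m"
  shows "smooth_upto N (smooth_step m)"
proof -
  have "expinv 0 s + expinv 0 (m - s) \<noteq> 0" for s
    using assms expinv_pos[of s 0] expinv_pos[of "m - s" 0] expinv_nonneg[of 0 s]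
      expinv_nonneg[of 0 "m - s"]
    by (cases "0 < s") auto
  moreover have "smooth_upto N (\<lambda>s. expinv 0 (m - s))"
    by (intro smooth_upto_compose[OF smooth_upto_expinv] smooth_upto_diff smooth_upto_const
        smooth_upto_linear bounded_linear_ident)
  ultimately show ?thesis
    unfolding smooth_step_def divide_inverse
    by (intro smooth_upto_mult smooth_upto_expinv smooth_upto_inverse smooth_upto_add)
qed

lemma smooth_step_eq_1: "0 < m \<Longrightarrow> m \<le> s \<Longrightarrow> smooth_step m s = 1"
  using expinv_pos[of s 0] by (simp add: smooth_step_def expinv_eq_0)

lemma smooth_step_eq_0: "s \<le> 0 \<Longrightarrow> smooth_step m s = 0"
  by (simp add: smooth_step_def expinv_eq_0)

lemma smooth_positive_on_compact:
  fixes K U :: "'a::euclidean_space set"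
  assumes K: "compact K" and U: "open U" and KU: "K \<subseteq> U"
  obtains S :: "'a \<Rightarrow> real" and C
  where "\<And>N. smooth_upto N S" "\<And>t. t \<in> K \<Longrightarrow> 0 < S t"
    "compact C" "C \<subseteq> U" "{t. S t \<noteq> 0} \<subseteq> C"
proof -
  have "\<forall>x\<in>K. \<exists>e>0. cball x e \<subseteq> U"
    using U KU open_contains_cball by blast
  then obtain r where r: "\<And>x. x \<in> K \<Longrightarrow> 0 < r x \<and> cball x (r x) \<subseteq> U"
    by metis
  have "K \<subseteq> (\<Union>x\<in>K. ball x (r x))"
    using r by force
  then obtain F where F: "F \<subseteq> K" "finite F" "K \<subseteq> (\<Union>x\<in>F. ball x (r x))"
    using compactE_image[OF K, of K "\<lambda>x. ball x (r x)"] by blast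
  define S where "S t = (\<Sum>x\<in>F. ball_bump x (r x) t)" for t
  define C where "C = (\<Union>x\<in>F. cball x (r x))"
  show ?thesis
  proof
    show "smooth_upto N S" for N
      unfolding S_def by (intro smooth_upto_sum F smooth_upto_ball_bump)
    show "0 < S t" if "t \<in> K" for t
    proof -
      obtain x where x: "x \<in> F" "t \<in> ball x (r x)"
        using F(3) \<open>t \<in> K\<close> by blast
      have "ball_bump x (r x) t \<le> S t"
        unfolding S_def by (rule member_le_sum) (use x F ball_bump_nonneg in auto)
      then show ?thesis using ball_bump_pos[OF x(2)] by simp
    qed
    show "compact C" "C \<subseteq> U"
      using F r unfolding C_def by (auto intro!: compact_UN)
    show "{t. S t \<noteq> 0} \<subseteq> C"
    proof
      fix t
      assume "t \<in> {t. S t \<noteq> 0}"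
      then obtain x where x: "x \<in> F" "ball_bump x (r x) t \<noteq> 0"
        unfolding S_def by (auto intro: sum.neutral)
      have "0 \<le> r x"
        using r F(1) x(1) by (simp add: less_imp_le subset_eq)
      then show "t \<in> C"
        unfolding C_def using ball_bump_eq_0 x by blast
    qed
  qed
qed

lemma smooth_cutoff_exists:
  fixes K U :: "'a::euclidean_space set"
  assumes "compact K" "open U" "K \<subseteq> U"
  obtains \<psi> :: "'a \<Rightarrow> real"
  where "smooth \<psi>" "compact (tsupport \<psi>)" "tsupport \<psi> \<subseteq> U" "\<forall>t\<in>K. \<psi> t = 1"
proof -
  obtain S :: "'a \<Rightarrow> real" and C where S: "\<And>N. smooth_upto N S" "\<And>t. t \<in> K \<Longrightarrow> 0 < S t"
    and C: "compact C" "C \<subseteq> U" "{t. S t \<noteq> 0} \<subseteq> C"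
    using smooth_positive_on_compact[OF assms] by blast
  obtain m where m: "0 < m" "\<And>t. t \<in> K \<Longrightarrow> m \<le> S t"
  proof (cases "K = {}")
    case False
    then obtain t0 where "t0 \<in> K" "\<forall>t\<in>K. S t0 \<le> S t"
      using continuous_attains_inf[OF \<open>compact K\<close> _ smooth_upto_continuous_on[OF S(1)]] by blast
    then show ?thesis using that S(2) by blast
  qed (use that[of 1] in auto)
  define \<psi> where "\<psi> t = smooth_step m (S t)" for t
  have "{t. \<psi> t \<noteq> 0} \<subseteq> C"
    using C(3) smooth_step_eq_0[of 0 m] by (auto simp: \<psi>_def)
  then have supp: "tsupport \<psi> \<subseteq> C"
    unfolding tsupport_def using compact_imp_closed[OF C(1)] closure_minimal by blast
  show ?thesis
  proof
    show "smooth \<psi>"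
      unfolding smooth_iff_smooth_upto \<psi>_def
      using smooth_upto_compose[OF smooth_upto_smooth_step[OF m(1)] S(1)] by blast
    show "compact (tsupport \<psi>)"
      using supp C(1) by (rule compact_tsupport_subset)
    show "tsupport \<psi> \<subseteq> U"
      using supp C(2) by blast
    show "\<forall>t\<in>K. \<psi> t = 1"
      using m smooth_step_eq_1 by (simp add: \<psi>_def)
  qed
qed

lemma smooth_reciprocal_away_from_0:
  assumes "0 < c"
  obtains G :: "real \<Rightarrow> real" where "smooth G" "\<And>s. c < \<bar>s\<bar> \<Longrightarrow> G s * s = 1"
proof
  \<comment> \<open>\<open>D s = s\<^sup>2\<close> for \<open>\<bar>s\<bar> > c\<close>, and \<open>D\<close> is positive everywhere.\<close>
  define D where "D s = s * s + expinv 0 (c * c - s * s)" for s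
  have D_nz: "D s \<noteq> 0" for s
  proof (cases "s = 0")
    case True
    then show ?thesis using assms expinv_pos[of "c * c" 0] by (simp add: D_def)
  next
    case False
    then have "0 < s * s" using not_real_square_gt_zero[of s] by blast
    then show ?thesis using expinv_nonneg[of 0 "c * c - s * s"] by (simp add: D_def)
  qed
  have D_smooth: "smooth_upto N D" for N
    unfolding D_def
    by (intro smooth_upto_add smooth_upto_mult smooth_upto_compose[OF smooth_upto_expinv]
        smooth_upto_diff smooth_upto_const smooth_upto_linear bounded_linear_ident)
  show "smooth (\<lambda>s. s * inverse (D s))"
    unfolding smooth_iff_smooth_upto
    by (intro allI smooth_upto_mult[OF smooth_upto_linear[OF bounded_linear_ident]]
        smooth_upto_inverse D_nz D_smooth)
  fix s :: real
  assume s: "c < \<bar>s\<bar>"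
  then have "c * c < s * s"
    using assms by (metis abs_mult_self_eq abs_of_pos mult_strict_mono' less_imp_le)
  then have "D s = s * s"
    by (simp add: D_def expinv_eq_0)
  then show "s * inverse (D s) * s = 1"
    using s assms by (simp add: field_simps)
qed

lemma test_fun_smooth_mult:
  "test_fun \<phi> \<Longrightarrow> smooth g \<Longrightarrow> test_fun (\<lambda>t. g t * \<phi> t)"
  unfolding test_fun_def
  using compact_tsupport_subset[OF tsupport_mult_subset[of g \<phi>]] smooth_mult[of g \<phi>] by blast

lemma test_fun_mult_smooth:
  "test_fun \<phi> \<Longrightarrow> smooth g \<Longrightarrow> test_fun (\<lambda>t. \<phi> t * g t)"
  using test_fun_smooth_mult[of \<phi> g] by (simp add: mult.commute)

lemma test_fun_zero: "test_fun (\<lambda>t. 0)"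
  by (simp add: test_fun_def tsupport_def smooth_iff_smooth_upto smooth_upto_const)

lemma test_fun_cutoff_exists:
  fixes K U :: "'a::euclidean_space set"
  assumes "compact K" "open U" "K \<subseteq> U"
  obtains \<psi> where "test_fun \<psi>" "tsupport \<psi> \<subseteq> U" "\<forall>t\<in>K. \<psi> t = 1"
proof -
  obtain \<psi> :: "'a \<Rightarrow> real"
    where \<psi>: "smooth \<psi>" "compact (tsupport \<psi>)" "tsupport \<psi> \<subseteq> U" "\<forall>t\<in>K. \<psi> t = 1"
    using smooth_cutoff_exists[OF assms] by blast
  have "tsupport (\<lambda>t. complex_of_real (\<psi> t)) = tsupport \<psi>"
    by (simp add: tsupport_def)
  then show ?thesis
    using that[of "\<lambda>t. complex_of_real (\<psi> t)"] \<psi> smooth_of_real[OF \<psi>(1)]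
    by (simp add: test_fun_def)
qed

lemma cutoff_mult:
  fixes \<phi> \<psi> :: "'a::topological_space \<Rightarrow> 'b::semiring_1"
  assumes "\<forall>t\<in>tsupport \<phi>. \<psi> t = 1"
  shows "(\<lambda>t. \<psi> t * \<phi> t) = \<phi>"
proof
  fix t
  show "\<psi> t * \<phi> t = \<phi> t"
    using assms in_tsupport[of \<phi> t] by (cases "\<phi> t = 0") auto
qed

lemma test_fun_divisible_near_nonzero:
  fixes g :: "'a::euclidean_space \<Rightarrow> real"
  assumes g: "smooth g" and "g t0 \<noteq> 0"
  obtains U where "open U" "t0 \<in> U"
    "\<And>\<phi>. test_fun \<phi> \<Longrightarrow> tsupport \<phi> \<subseteq> U \<Longrightarrow>
      \<exists>\<psi>. test_fun \<psi> \<and> \<phi> = (\<lambda>t. complex_of_real (g t) * \<psi> t)"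
proof
  define c where "c = \<bar>g t0\<bar> / 2"
  have c: "0 < c"
    using \<open>g t0 \<noteq> 0\<close> by (simp add: c_def)
  obtain G where G: "smooth G" "\<And>s. c < \<bar>s\<bar> \<Longrightarrow> G s * s = 1"
    using smooth_reciprocal_away_from_0[OF c] by blast
  have "continuous_on UNIV g"
    using g smooth_upto_continuous_on unfolding smooth_iff_smooth_upto by blast
  then show "open {t. c < \<bar>g t\<bar>}" "t0 \<in> {t. c < \<bar>g t\<bar>}"
    using c by (auto intro!: open_Collect_less continuous_intros simp: c_def)
  fix \<phi>
  assume \<phi>: "test_fun \<phi>" "tsupport \<phi> \<subseteq> {t. c < \<bar>g t\<bar>}"
  define \<psi> where "\<psi> t = complex_of_real (G (g t)) * \<phi> t" for t
  have "test_fun \<psi>"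
    unfolding \<psi>_def by (intro test_fun_smooth_mult[OF \<phi>(1)] smooth_of_real smooth_compose[OF G(1) g])
  moreover have "\<phi> = (\<lambda>t. complex_of_real (g t) * \<psi> t)"
  proof
    fix t
    show "\<phi> t = complex_of_real (g t) * \<psi> t"
    proof (cases "\<phi> t = 0")
      case False
      then have "c < \<bar>g t\<bar>"
        using \<phi>(2) in_tsupport by blast
      then have "complex_of_real (g t) * complex_of_real (G (g t)) = 1"
        using G(2) by (metis mult.commute of_real_1 of_real_mult)
      then show ?thesis
        by (simp add: \<psi>_def mult.assoc[symmetric])
    qed (simp add: \<psi>_def)
  qed
  ultimately show "\<exists>\<psi>. test_fun \<psi> \<and> \<phi> = (\<lambda>t. complex_of_real (g t) * \<psi> t)"
    by blast
qed

section \<open>Hyperoperators and their functional calculus\<close>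

lemma bdd_above_opnorm_set:
  assumes "bounded_linear T"
  shows "bdd_above {norm (T x) | x. x \<in> Y \<and> norm x \<le> 1}"
proof -
  obtain K where K: "\<And>x. norm (T x) \<le> norm x * K" "0 < K"
    using bounded_linear.pos_bounded[OF assms] by blast
  have "norm (T x) \<le> K" if "norm x \<le> 1" for x
    using K(1)[of x] mult_right_mono[OF that less_imp_le[OF K(2)]] by simp
  then show ?thesis
    by (intro bdd_aboveI[where M=K]) auto
qed

lemma opnorm_on_nonneg: "bounded_linear T \<Longrightarrow> 0 \<le> opnorm_on Y T"
  unfolding opnorm_on_def by (rule cSup_upper) (auto intro: bdd_above_opnorm_set)

lemma opnorm_on_mono: "bounded_linear T \<Longrightarrow> Y \<subseteq> Z \<Longrightarrow> opnorm_on Y T \<le> opnorm_on Z T"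
  unfolding opnorm_on_def by (rule cSup_subset_mono) (auto intro: bdd_above_opnorm_set)

lemma hsupport_mono: "Y \<subseteq> Z \<Longrightarrow> hsupport Y B \<subseteq> hsupport Z B"
  unfolding hsupport_def by blast

locale complex_banach_space =
  fixes smul :: "complex \<Rightarrow> 'x::banach \<Rightarrow> 'x"
  assumes complex_banach: "complex_banach smul"
begin

lemma smul_of_real: "smul (complex_of_real r) x = r *\<^sub>R x"
  using complex_banach unfolding complex_banach_def by blast

lemma smul_add_right: "smul c (x + y) = smul c x + smul c y"
  using complex_banach unfolding complex_banach_def vector_space_def by blast

lemma smul_smul: "smul a (smul b x) = smul (a * b) x"
  using complex_banach unfolding complex_banach_def vector_space_def by blast

lemma norm_smul: "norm (smul c x) = cmod c * norm x"
  using complex_banach unfolding complex_banach_def by blast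

lemma smul_zero_left: "smul 0 x = 0"
  using smul_of_real[of 0 x] by simp

lemma bounded_linear_smul: "bounded_linear (smul c)"
proof (rule bounded_linear_intro[where K="cmod c"])
  show "smul c (r *\<^sub>R x) = r *\<^sub>R smul c x" for r x
    by (metis smul_of_real smul_smul mult.commute)
qed (simp_all add: smul_add_right norm_smul)

lemma smul_zero_right: "smul c 0 = 0"
  using bounded_linear_smul linear_0 bounded_linear.linear by blast

lemma csubspace_closure:
  assumes S: "csubspace smul S"
  shows "csubspace smul (closure S)"
proof -
  have "0 \<in> closure S"
    using S closure_subset unfolding csubspace_def by blast
  moreover have "x + y \<in> closure S" if "x \<in> closure S" "y \<in> closure S" for x y
  proof -
    have "(\<lambda>z. fst z + snd z) ` closure (S \<times> S) \<subseteq> closure S"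
      using S unfolding csubspace_def
      by (intro image_closure_subset continuous_intros) (auto intro!: closure_subset[THEN subsetD])
    then show ?thesis
      using that by (force simp: closure_Times)
  qed
  moreover have "smul c x \<in> closure S" if "x \<in> closure S" for c x
  proof -
    have "smul c ` closure S \<subseteq> closure S"
      using S unfolding csubspace_def
      by (intro image_closure_subset linear_continuous_on[OF bounded_linear_smul])
         (auto intro!: closure_subset[THEN subsetD])
    then show ?thesis using that by blast
  qed
  ultimately show ?thesis
    unfolding csubspace_def by blast
qed

end

locale hyperop = complex_banach_space smul
  for smul :: "complex \<Rightarrow> 'x::banach \<Rightarrow> 'x" +
  fixes A :: "('a::euclidean_space \<Rightarrow> complex) \<Rightarrow> 'x \<Rightarrow> 'x"
  assumes hyperoperator: "hyperoperator smul UNIV A"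
begin

lemma A_bounded_op: "test_fun \<phi> \<Longrightarrow> bounded_op_on smul UNIV (A \<phi>)"
  using hyperoperator by (simp add: hyperoperator_def)

lemma A_add_fun: "test_fun \<phi> \<Longrightarrow> test_fun \<psi> \<Longrightarrow> A (\<lambda>t. \<phi> t + \<psi> t) x = A \<phi> x + A \<psi> x"
  using hyperoperator by (simp add: hyperoperator_def)

lemma A_scale_fun: "test_fun \<phi> \<Longrightarrow> A (\<lambda>t. c * \<phi> t) x = smul c (A \<phi> x)"
  using hyperoperator by (simp add: hyperoperator_def)

lemma A_mult_fun: "test_fun \<phi> \<Longrightarrow> test_fun \<psi> \<Longrightarrow> A (\<lambda>t. \<phi> t * \<psi> t) x = A \<phi> (A \<psi> x)"
  using hyperoperator by (simp add: hyperoperator_def)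

lemma A_tendsto_zero: "D_tendsto_zero \<phi>s \<Longrightarrow> (\<lambda>j. opnorm_on UNIV (A (\<phi>s j))) \<longlonglongrightarrow> 0"
  using hyperoperator by (simp add: hyperoperator_def)

lemma A_nondegenerate: "(\<And>\<phi>. test_fun \<phi> \<Longrightarrow> A \<phi> x = 0) \<Longrightarrow> x = 0"
  using hyperoperator by (simp add: hyperoperator_def)

lemma A_add: "test_fun \<phi> \<Longrightarrow> A \<phi> (x + y) = A \<phi> x + A \<phi> y"
  using A_bounded_op unfolding bounded_op_on_def by blast

lemma A_smul: "test_fun \<phi> \<Longrightarrow> A \<phi> (smul c x) = smul c (A \<phi> x)"
  using A_bounded_op unfolding bounded_op_on_def by blast

lemma bounded_linear_A:
  assumes "test_fun \<phi>"
  shows "bounded_linear (A \<phi>)"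
proof -
  obtain K where K: "\<And>x. norm (A \<phi> x) \<le> K * norm x"
    using A_bounded_op[OF assms] unfolding bounded_op_on_def by blast
  show ?thesis
  proof (rule bounded_linear_intro[where K=K])
    show "A \<phi> (r *\<^sub>R x) = r *\<^sub>R A \<phi> x" for r x
      using A_smul[OF assms, of "complex_of_real r" x] by (simp add: smul_of_real)
    show "norm (A \<phi> x) \<le> norm x * K" for x
      using K[of x] by (simp add: mult.commute)
  qed (rule A_add[OF assms])
qed

lemma A_0: "test_fun \<phi> \<Longrightarrow> A \<phi> 0 = 0"
  using bounded_linear_A linear_0 bounded_linear.linear by blast

lemma A_diff: "test_fun \<phi> \<Longrightarrow> A \<phi> (x - y) = A \<phi> x - A \<phi> y"
  using bounded_linear_A linear_diff bounded_linear.linear by blast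

lemma A_zero_fun: "A (\<lambda>t. 0) x = 0"
  using A_scale_fun[OF test_fun_zero, of 0 x] by (simp add: smul_zero_left)

lemma A_vanishes_on_closure:
  assumes "test_fun \<phi>" "\<forall>x\<in>S. A \<phi> x = 0" "x \<in> closure S"
  shows "A \<phi> x = 0"
proof -
  have "closed {x. A \<phi> x = 0}"
    using linear_continuous_on[OF bounded_linear_A[OF assms(1)]]
    by (rule closed_Collect_eq[OF _ continuous_on_const])
  then have "closure S \<subseteq> {x. A \<phi> x = 0}"
    using assms(2) by (intro closure_minimal) auto
  then show ?thesis using assms(3) by blast
qed

lemma A_mult_cong:
  assumes "test_fun \<kappa>" "test_fun \<phi>" "test_fun \<kappa>'" "test_fun \<phi>'"
    and "\<And>t. \<kappa> t * \<phi> t = \<kappa>' t * \<phi>' t"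
  shows "A \<kappa> (A \<phi> y) = A \<kappa>' (A \<phi>' y)"
  using A_mult_fun[OF assms(1,2), of y] A_mult_fun[OF assms(3,4), of y] assms(5) by simp

lemma hdom_iff: "x \<in> hdom UNIV A \<longleftrightarrow> (\<exists>\<phi> y. test_fun \<phi> \<and> x = A \<phi> y)"
  unfolding hdom_def by blast

lemma A_in_hdom: "test_fun \<phi> \<Longrightarrow> A \<phi> y \<in> hdom UNIV A"
  unfolding hdom_iff by blast

lemma hdom_common_cutoff:
  assumes "x1 \<in> hdom UNIV A" "x2 \<in> hdom UNIV A"
  obtains \<psi> where "test_fun \<psi>" "A \<psi> x1 = x1" "A \<psi> x2 = x2"
proof -
  obtain \<phi>1 y1 where \<phi>1: "test_fun \<phi>1" "x1 = A \<phi>1 y1"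
    using assms(1) hdom_iff by blast
  obtain \<phi>2 y2 where \<phi>2: "test_fun \<phi>2" "x2 = A \<phi>2 y2"
    using assms(2) hdom_iff by blast
  have "compact (tsupport \<phi>1 \<union> tsupport \<phi>2)"
    using \<phi>1(1) \<phi>2(1) by (simp add: test_fun_def compact_Un)
  then obtain \<psi> where \<psi>: "test_fun \<psi>" "\<forall>t\<in>tsupport \<phi>1 \<union> tsupport \<phi>2. \<psi> t = 1"
    using test_fun_cutoff_exists[of _ UNIV] by blast
  have "A \<psi> x1 = x1" "A \<psi> x2 = x2"
    using A_mult_fun[OF \<psi>(1) \<phi>1(1), of y1] A_mult_fun[OF \<psi>(1) \<phi>2(1), of y2]
      cutoff_mult[of \<phi>1 \<psi>] cutoff_mult[of \<phi>2 \<psi>] \<psi>(2) \<phi>1(2) \<phi>2(2)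
    by simp_all
  then show ?thesis using \<psi>(1) that by blast
qed

lemma zero_in_hdom: "0 \<in> hdom UNIV A"
  using A_in_hdom[OF test_fun_zero, of 0] A_zero_fun by simp

lemma hdom_add: "x1 \<in> hdom UNIV A \<Longrightarrow> x2 \<in> hdom UNIV A \<Longrightarrow> x1 + x2 \<in> hdom UNIV A"
  by (metis A_add A_in_hdom hdom_common_cutoff)

lemma hdom_smul: "x \<in> hdom UNIV A \<Longrightarrow> smul c x \<in> hdom UNIV A"
  by (metis A_smul A_in_hdom hdom_iff)

text \<open>\<^const>\<open>hcalc\<close> picks some representation \<open>x = A(\<phi>) y\<close> by choice; nondegeneracy of \<open>A\<close>
  shows that the choice does not matter.\<close>

lemma hcalc_A:
  assumes \<phi>: "test_fun \<phi>" and g: "smooth g"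
  shows "hcalc UNIV A g (A \<phi> y) = A (\<lambda>t. complex_of_real (g t) * \<phi> t) y"
proof -
  let ?g = "\<lambda>t. complex_of_real (g t)"
  have g': "smooth ?g"
    using smooth_of_real[OF g] .
  obtain \<phi>' y' where \<phi>': "test_fun \<phi>'" "A \<phi> y = A \<phi>' y'"
    and hcalc: "hcalc UNIV A g (A \<phi> y) = A (\<lambda>t. ?g t * \<phi>' t) y'"
    using someI_ex[of "\<lambda>v. \<exists>\<phi>' y'. test_fun \<phi>' \<and> y' \<in> UNIV \<and> A \<phi> y = A \<phi>' y'
        \<and> v = A (\<lambda>t. ?g t * \<phi>' t) y'"] \<phi>
    unfolding hcalc_def by blast
  have "A (\<lambda>t. ?g t * \<phi>' t) y' - A (\<lambda>t. ?g t * \<phi> t) y = 0"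
  proof (rule A_nondegenerate)
    fix \<kappa> :: "'a \<Rightarrow> complex"
    assume \<kappa>: "test_fun \<kappa>"
    have \<kappa>g: "test_fun (\<lambda>t. \<kappa> t * ?g t)"
      using test_fun_mult_smooth[OF \<kappa> g'] .
    have "A \<kappa> (A (\<lambda>t. ?g t * \<phi>' t) y') = A (\<lambda>t. \<kappa> t * ?g t) (A \<phi>' y')"
      by (rule A_mult_cong[OF \<kappa> test_fun_smooth_mult[OF \<phi>'(1) g'] \<kappa>g \<phi>'(1)]) simp
    also have "\<dots> = A \<kappa> (A (\<lambda>t. ?g t * \<phi> t) y)"
      unfolding \<phi>'(2)[symmetric]
      by (rule A_mult_cong[OF \<kappa>g \<phi> \<kappa> test_fun_smooth_mult[OF \<phi> g']]) simp
    finally show "A \<kappa> (A (\<lambda>t. ?g t * \<phi>' t) y' - A (\<lambda>t. ?g t * \<phi> t) y) = 0"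
      by (simp add: A_diff[OF \<kappa>])
  qed
  then show ?thesis
    using hcalc by simp
qed

lemma hcalc_fixed:
  "test_fun \<psi> \<Longrightarrow> smooth g \<Longrightarrow> A \<psi> x = x \<Longrightarrow>
    hcalc UNIV A g x = A (\<lambda>t. complex_of_real (g t) * \<psi> t) x"
  using hcalc_A[of \<psi> g x] by simp

lemma A_hcalc:
  assumes x: "x \<in> hdom UNIV A" and \<psi>: "test_fun \<psi>" and g: "smooth g"
  shows "A \<psi> (hcalc UNIV A g x) = A (\<lambda>t. \<psi> t * complex_of_real (g t)) x"
proof -
  obtain \<phi> y where \<phi>: "test_fun \<phi>" "x = A \<phi> y"
    using x hdom_iff by blast
  have g': "smooth (\<lambda>t. complex_of_real (g t))"
    using smooth_of_real[OF g] .
  show ?thesis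
    unfolding \<phi>(2) hcalc_A[OF \<phi>(1) g]
    by (rule A_mult_cong[OF \<psi> test_fun_smooth_mult[OF \<phi>(1) g'] test_fun_mult_smooth[OF \<psi> g'] \<phi>(1)])
       simp
qed

lemma hcalc_hcalc_commute:
  assumes x: "x \<in> hdom UNIV A" and g: "smooth g" and p: "smooth p"
  shows "hcalc UNIV A g (hcalc UNIV A p x) = hcalc UNIV A p (hcalc UNIV A g x)"
proof -
  obtain \<phi> y where \<phi>: "test_fun \<phi>" "x = A \<phi> y"
    using x hdom_iff by blast
  have "test_fun (\<lambda>t. complex_of_real (p t) * \<phi> t)" "test_fun (\<lambda>t. complex_of_real (g t) * \<phi> t)"
    using \<phi>(1) g p by (simp_all add: test_fun_smooth_mult smooth_of_real)
  then show ?thesis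
    unfolding \<phi>(2) using g p by (simp add: hcalc_A \<phi>(1) ac_simps)
qed

lemma hcalc_add:
  assumes g: "smooth g" and x: "x1 \<in> hdom UNIV A" "x2 \<in> hdom UNIV A"
  shows "hcalc UNIV A g (x1 + x2) = hcalc UNIV A g x1 + hcalc UNIV A g x2"
proof -
  obtain \<psi> where \<psi>: "test_fun \<psi>" "A \<psi> x1 = x1" "A \<psi> x2 = x2"
    using hdom_common_cutoff[OF x] .
  have "test_fun (\<lambda>t. complex_of_real (g t) * \<psi> t)"
    using test_fun_smooth_mult[OF \<psi>(1) smooth_of_real[OF g]] .
  then show ?thesis
    using \<psi> A_add[OF \<psi>(1), of x1 x2] by (simp add: hcalc_fixed[OF \<psi>(1) g] A_add)
qed

lemma hcalc_smul:
  assumes g: "smooth g" and x: "x \<in> hdom UNIV A"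
  shows "hcalc UNIV A g (smul c x) = smul c (hcalc UNIV A g x)"
proof -
  obtain \<psi> where \<psi>: "test_fun \<psi>" "A \<psi> x = x"
    using hdom_common_cutoff[OF x x] by metis
  have "test_fun (\<lambda>t. complex_of_real (g t) * \<psi> t)"
    using test_fun_smooth_mult[OF \<psi>(1) smooth_of_real[OF g]] .
  then show ?thesis
    using \<psi> A_smul[OF \<psi>(1), of c x] by (simp add: hcalc_fixed[OF \<psi>(1) g] A_smul)
qed

lemma hcalc_0: "smooth g \<Longrightarrow> hcalc UNIV A g 0 = 0"
  using hcalc_smul[OF _ zero_in_hdom, of g 0] by (simp add: smul_zero_left)

subsection \<open>The joint kernel of \<open>f(a)\<close> on \<open>D\<^sub>A\<close>\<close>

definition calc_kernel :: "('a \<Rightarrow> real^'m) \<Rightarrow> 'x set" where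
  "calc_kernel f = {x \<in> hdom UNIV A. \<forall>i. hcalc UNIV A (\<lambda>t. f t $ i) x = 0}"

lemma calc_kernel_hdom: "x \<in> calc_kernel f \<Longrightarrow> x \<in> hdom UNIV A"
  unfolding calc_kernel_def by blast

lemma csubspace_calc_kernel: "smooth f \<Longrightarrow> csubspace smul (calc_kernel f)"
  unfolding csubspace_def calc_kernel_def
  by (simp add: zero_in_hdom hdom_add hdom_smul hcalc_0 hcalc_add hcalc_smul smooth_component
      smul_zero_right)

lemma hcalc_in_calc_kernel:
  assumes f: "smooth f" and p: "smooth p" and x: "x \<in> calc_kernel f"
  shows "hcalc UNIV A p x \<in> calc_kernel f"
proof -
  obtain \<phi> y where \<phi>: "test_fun \<phi>" "x = A \<phi> y"
    using calc_kernel_hdom[OF x] hdom_iff by blast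
  have "hcalc UNIV A p x \<in> hdom UNIV A"
    unfolding \<phi>(2) hcalc_A[OF \<phi>(1) p]
    by (intro A_in_hdom test_fun_smooth_mult[OF \<phi>(1)] smooth_of_real p)
  moreover have "hcalc UNIV A (\<lambda>t. f t $ i) (hcalc UNIV A p x) = 0" for i
    using x hcalc_hcalc_commute[OF calc_kernel_hdom[OF x] smooth_component[OF f] p]
    by (simp add: calc_kernel_def hcalc_0 p)
  ultimately show ?thesis
    unfolding calc_kernel_def by blast
qed

lemma A_vanishes_on_calc_kernel:
  assumes f: "smooth f" and \<phi>: "test_fun \<phi>" and x: "x \<in> closure (calc_kernel f)"
  shows "A (\<lambda>t. complex_of_real (f t $ i) * \<phi> t) x = 0"
proof (rule A_vanishes_on_closure[OF _ _ x])
  have g: "smooth (\<lambda>t. complex_of_real (f t $ i))"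
    using smooth_of_real[OF smooth_component[OF f]] .
  show "test_fun (\<lambda>t. complex_of_real (f t $ i) * \<phi> t)"
    using test_fun_smooth_mult[OF \<phi> g] .
  show "\<forall>z\<in>calc_kernel f. A (\<lambda>t. complex_of_real (f t $ i) * \<phi> t) z = 0"
  proof
    fix z
    assume z: "z \<in> calc_kernel f"
    have "A (\<lambda>t. complex_of_real (f t $ i) * \<phi> t) z = A \<phi> (hcalc UNIV A (\<lambda>t. f t $ i) z)"
      using A_hcalc[OF calc_kernel_hdom[OF z] \<phi> smooth_component[OF f]] by (simp add: mult.commute)
    also have "\<dots> = 0"
      using z A_0[OF \<phi>] by (simp add: calc_kernel_def)
    finally show "A (\<lambda>t. complex_of_real (f t $ i) * \<phi> t) z = 0" .
  qed
qed

lemma A_in_calc_kernel: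
  assumes f: "smooth f" and \<phi>: "test_fun \<phi>" and y: "y \<in> closure (calc_kernel f)"
  shows "A \<phi> y \<in> calc_kernel f"
  using A_vanishes_on_calc_kernel[OF f \<phi> y] A_in_hdom[OF \<phi>]
  by (simp add: calc_kernel_def hcalc_A[OF \<phi> smooth_component[OF f]])

lemma A_in_calc_kernel_of_tsupport:
  assumes f: "smooth f" and \<phi>: "test_fun \<phi>" and supp: "tsupport \<phi> \<subseteq> f -` {0}"
  shows "A \<phi> x \<in> calc_kernel f"
proof -
  have "(\<lambda>t. complex_of_real (f t $ i) * \<phi> t) = (\<lambda>t. 0)" for i
    using supp in_tsupport[of \<phi>] by fastforce
  then show ?thesis
    using A_in_hdom[OF \<phi>]
    by (simp add: calc_kernel_def hcalc_A[OF \<phi> smooth_component[OF f]] A_zero_fun)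
qed

lemma hdom_closure_calc_kernel:
  assumes f: "smooth f"
  shows "hdom (closure (calc_kernel f)) A = calc_kernel f"
proof
  show "hdom (closure (calc_kernel f)) A \<subseteq> calc_kernel f"
    unfolding hdom_def using A_in_calc_kernel[OF f] by blast
  show "calc_kernel f \<subseteq> hdom (closure (calc_kernel f)) A"
  proof
    fix x
    assume x: "x \<in> calc_kernel f"
    then obtain \<psi> where "test_fun \<psi>" "A \<psi> x = x"
      using hdom_common_cutoff calc_kernel_hdom by metis
    then show "x \<in> hdom (closure (calc_kernel f)) A"
      unfolding hdom_def using x closure_subset by force
  qed
qed

lemma hyperoperator_restrict:
  assumes Y: "closed Y" "csubspace smul Y"
    and invariant: "\<And>\<phi>. test_fun \<phi> \<Longrightarrow> A \<phi> ` Y \<subseteq> Y"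
    and dense: "Y \<subseteq> closure (hdom Y A)"
  shows "hyperoperator smul Y A"
proof -
  have "bounded_op_on smul Y (A \<phi>)" if \<phi>: "test_fun \<phi>" for \<phi>
  proof -
    obtain K where "\<And>x. norm (A \<phi> x) \<le> norm x * K"
      using bounded_linear.bounded[OF bounded_linear_A[OF \<phi>]] by blast
    then have "\<forall>x\<in>Y. norm (A \<phi> x) \<le> K * norm x"
      by (simp add: mult.commute)
    then show ?thesis
      unfolding bounded_op_on_def using invariant[OF \<phi>] A_add[OF \<phi>] A_smul[OF \<phi>] by blast
  qed
  moreover have "(\<lambda>j. opnorm_on Y (A (\<phi>s j))) \<longlonglongrightarrow> 0" if \<phi>s: "D_tendsto_zero \<phi>s" for \<phi>s
  proof (rule tendsto_sandwich[OF _ _ tendsto_const A_tendsto_zero[OF \<phi>s]])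
    have "bounded_linear (A (\<phi>s j))" for j
      using \<phi>s bounded_linear_A unfolding D_tendsto_zero_def by blast
    then show "\<forall>\<^sub>F j in sequentially. 0 \<le> opnorm_on Y (A (\<phi>s j))"
      and "\<forall>\<^sub>F j in sequentially. opnorm_on Y (A (\<phi>s j)) \<le> opnorm_on UNIV (A (\<phi>s j))"
      by (simp_all add: opnorm_on_nonneg opnorm_on_mono)
  qed
  ultimately show ?thesis
    using Y dense A_add_fun A_scale_fun A_mult_fun A_nondegenerate
    unfolding hyperoperator_def hdom_def by simp
qed

lemma hsupport_singleton_0: "hsupport {0} A = {}"
  unfolding hsupport_def using A_0 open_UNIV by blast

lemma hsupport_subset_zero_set:
  assumes f: "smooth f"
  shows "hsupport (closure (calc_kernel f)) A \<subseteq> f -` {0}"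
proof
  fix t0
  assume t0: "t0 \<in> hsupport (closure (calc_kernel f)) A"
  show "t0 \<in> f -` {0}"
  proof (rule ccontr)
    assume "t0 \<notin> f -` {0}"
    then obtain i where "f t0 $ i \<noteq> 0"
      by (metis vec_eq_iff vimage_singleton_eq zero_index)
    then obtain U where U: "open U" "t0 \<in> U"
      and divisible: "\<And>\<phi>. test_fun \<phi> \<Longrightarrow> tsupport \<phi> \<subseteq> U \<Longrightarrow>
        \<exists>\<psi>. test_fun \<psi> \<and> \<phi> = (\<lambda>t. complex_of_real (f t $ i) * \<psi> t)"
      using test_fun_divisible_near_nonzero[OF smooth_component[OF f]] by blast
    have "A \<phi> x = 0"
      if "test_fun \<phi>" "tsupport \<phi> \<subseteq> U" "x \<in> closure (calc_kernel f)" for \<phi> x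
      using divisible[OF that(1,2)] A_vanishes_on_calc_kernel[OF f _ that(3)] by metis
    then show False
      using t0 U unfolding hsupport_def by blast
  qed
qed

lemma interior_zero_set_hsupport_subset:
  assumes f: "smooth f"
  shows "interior (f -` {0}) \<inter> hsupport UNIV A \<subseteq> hsupport (closure (calc_kernel f)) A"
proof
  fix t
  assume t: "t \<in> interior (f -` {0}) \<inter> hsupport UNIV A"
  show "t \<in> hsupport (closure (calc_kernel f)) A"
    unfolding hsupport_def
  proof clarify
    fix U
    assume U: "open U" "t \<in> U"
      and vanish: "\<forall>\<phi>. test_fun \<phi> \<and> tsupport \<phi> \<subseteq> U \<longrightarrow> (\<forall>x\<in>closure (calc_kernel f). A \<phi> x = 0)"
    define V where "V = U \<inter> interior (f -` {0})"
    have V: "open V" "t \<in> V"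
      using U t by (auto simp: V_def)
    then obtain \<phi> x where \<phi>: "test_fun \<phi>" "tsupport \<phi> \<subseteq> V" "A \<phi> x \<noteq> 0"
      using t unfolding hsupport_def by blast
    obtain \<psi> where \<psi>: "test_fun \<psi>" "tsupport \<psi> \<subseteq> V" "\<forall>s\<in>tsupport \<phi>. \<psi> s = 1"
      using test_fun_cutoff_exists[OF _ V(1) \<phi>(2)] \<phi>(1) unfolding test_fun_def by blast
    have "tsupport \<psi> \<subseteq> f -` {0}"
      using \<psi>(2) interior_subset unfolding V_def by blast
    then have "A \<psi> x \<in> calc_kernel f"
      by (rule A_in_calc_kernel_of_tsupport[OF f \<psi>(1)])
    then have "A \<phi> (A \<psi> x) = 0"
      using vanish \<phi>(1,2) closure_subset unfolding V_def by blast
    moreover have "A \<phi> (A \<psi> x) = A \<phi> x"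
      using A_mult_fun[OF \<phi>(1) \<psi>(1), of x] cutoff_mult[OF \<psi>(3)] by (simp add: mult.commute)
    ultimately show False
      using \<phi>(3) by simp
  qed
qed

end

theorem proposition9p1:
  fixes smul :: "complex \<Rightarrow> 'x::banach \<Rightarrow> 'x"
    and A :: "(real^'n \<Rightarrow> complex) \<Rightarrow> 'x \<Rightarrow> 'x"
    and f :: "real^'n \<Rightarrow> real^'m"
    and X' Y :: "'x set"
  assumes X: "complex_banach smul"
    and A: "hyperoperator smul UNIV A"
    and f: "smooth f"
    and X'_def: "X' = {x \<in> hdom UNIV A. \<forall>i. hcalc UNIV A (\<lambda>t. f t $ i) x = 0}"
    and Y_def: "Y = closure X'"
  shows "closed Y \<and> csubspace smul Y
      \<and> (\<forall>j. \<forall>x\<in>X'. hcalc UNIV A (\<lambda>t. t $ j) x \<in> X')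
      \<and> (\<forall>\<phi>. test_fun \<phi> \<longrightarrow> A \<phi> ` Y \<subseteq> Y)
      \<and> hyperoperator smul Y A
      \<and> hdom Y A = X'
      \<and> interior (f -` {0}) \<inter> hsupport UNIV A \<subseteq> hsupport Y A
      \<and> hsupport Y A \<subseteq> f -` {0} \<inter> hsupport UNIV A
      \<and> (\<forall>U. open U \<and> U \<subseteq> f -` {0} \<and> U \<inter> hsupport UNIV A \<noteq> {} \<longrightarrow> Y \<noteq> {0})"
proof -
  interpret hyperop smul A
    by (intro hyperop.intro complex_banach_space.intro hyperop_axioms.intro X A)
  have X': "X' = calc_kernel f"
    unfolding X'_def calc_kernel_def ..
  have Y: "Y = closure (calc_kernel f)"
    unfolding Y_def X' ..
  have csub: "csubspace smul Y"
    unfolding Y by (rule csubspace_closure[OF csubspace_calc_kernel[OF f]])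
  have invariant: "\<forall>\<phi>. test_fun \<phi> \<longrightarrow> A \<phi> ` Y \<subseteq> Y"
    unfolding Y using A_in_calc_kernel[OF f] closure_subset by blast
  have hdom: "hdom Y A = X'"
    unfolding Y X' by (rule hdom_closure_calc_kernel[OF f])
  have supp_lower: "interior (f -` {0}) \<inter> hsupport UNIV A \<subseteq> hsupport Y A"
    unfolding Y by (rule interior_zero_set_hsupport_subset[OF f])
  have "hyperoperator smul Y A"
    using csub invariant hdom by (intro hyperoperator_restrict) (auto simp: Y_def)
  moreover have "hsupport Y A \<subseteq> f -` {0} \<inter> hsupport UNIV A"
    unfolding Y using hsupport_subset_zero_set[OF f] hsupport_mono[of _ UNIV] by blast
  moreover have "\<forall>U. open U \<and> U \<subseteq> f -` {0} \<and> U \<inter> hsupport UNIV A \<noteq> {} \<longrightarrow> Y \<noteq> {0}"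
    using interior_maximal[of _ "f -` {0}"] supp_lower hsupport_singleton_0 by blast
  moreover have "\<forall>j. \<forall>x\<in>X'. hcalc UNIV A (\<lambda>t. t $ j) x \<in> X'"
    unfolding X' using hcalc_in_calc_kernel[OF f smooth_coordinate] by blast
  ultimately show ?thesis
    using csub invariant hdom supp_lower by (simp add: Y_def)
qed

end
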